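(* In the square, the only $\lambda$-stable periodic cylinders are the two ping-pong cylinders and the two Fagnano cylinders of period four (those of slope $\pm1$).
   Context: For a polygon $P$ with sides labeled anticlockwise $1,\dots,d$, let $\Phi$ be its billiard map (collision to collision, specular reflection), in coordinates $(s,\theta)$ with $s$ arc length on $\partial P$ and $\theta\in(-\pi/2,\pi/2)$ the angle from the inward normal. For $\lambda>0$ let $R_\lambda(s,\theta)=(s,\lambda\theta)$ and $\Phi_\lambda:=R_\lambda\circ\Phi$. A periodic cylinder is a maximal one-parameter family of parallel periodic orbits of $\Phi$ with the same itinerary (sequence of sides hit). A ping-pong cylinder consists of orbits bouncing perpendicularly between two parallel sides. A Fagnano orbit is a periodic orbit whose itinerary satisfies $i_{k+1}=i_k+m\pmod d$ for a fixed $1\le m<d$; its cylinder is a Fagnano cylinder. A periodic orbit $q$ of $\Phi$ is $\lambda^{+}$-stable (resp. $\lambda^-$-stable) if there exist a strictly decreasing (resp. strictly increasing) sequence $\lambda_n\to1$ and periodic orbits $q_n$ of $\Phi_{\lambda_n}$ with the same itinerary as $q$ such that $q_n\to q$. A periodic cylinder is $\lambda$-stable if it contains a $\lambda^+$-stable periodic orbit and a $\lambda^-$-stable periodic orbit. *)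

theory Defs
  imports "HOL-Analysis.Analysis"
begin

text \<open>Billiards in the unit square [0,1]^2.  The boundary is parametrised by arc length
  s in [0,4), starting at the vertex (0,0) and running anticlockwise; side k (k = 1..4)
  is the open arc s in (k-1,k).  Phase points are pairs (s, theta).\<close>

type_synonym phase = "real \<times> real"

definition side :: "real \<Rightarrow> nat" where
  "side s = nat \<lfloor>s\<rfloor> + 1"

definition bpt :: "real \<Rightarrow> real \<times> real" where
  "bpt s = (if s < 1 then (s, 0) else if s < 2 then (1, s - 1)
            else if s < 3 then (3 - s, 1) else (0, 4 - s))"

definition nrm :: "nat \<Rightarrow> real \<times> real" where
  "nrm k = (if k = 1 then (0, 1) else if k = 2 then (-1, 0) else if k = 3 then (0, -1) else (1, 0))"

definition tng :: "nat \<Rightarrow> real \<times> real" where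
  "tng k = (if k = 1 then (1, 0) else if k = 2 then (0, 1) else if k = 3 then (-1, 0) else (0, -1))"

definition dir :: "real \<Rightarrow> real \<Rightarrow> real \<times> real" where
  "dir s \<theta> = cos \<theta> *\<^sub>R nrm (side s) + sin \<theta> *\<^sub>R tng (side s)"

definition open_square :: "(real \<times> real) set" where
  "open_square = {(x, y). 0 < x \<and> x < 1 \<and> 0 < y \<and> y < 1}"

definition in_phase :: "phase \<Rightarrow> bool" where
  "in_phase x \<longleftrightarrow> 0 \<le> fst x \<and> fst x < 4 \<and> fst x \<notin> \<int> \<and> - (pi/2) < snd x \<and> snd x < pi/2"

text \<open>The billiard map Phi, as its graph: y = Phi x.  (It is undefined when the
  trajectory hits a vertex.)  Specular reflection preserves the tangential component of
  the velocity, so the outgoing angle theta' satisfies sin theta' = v . tangent.\<close>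
definition billiard_step :: "phase \<Rightarrow> phase \<Rightarrow> bool" where
  "billiard_step x y \<longleftrightarrow> in_phase x \<and> in_phase y \<and>
     (\<exists>t>0. bpt (fst y) = bpt (fst x) + t *\<^sub>R dir (fst x) (snd x)
        \<and> (\<forall>\<tau>. 0 < \<tau> \<and> \<tau> < t \<longrightarrow> bpt (fst x) + \<tau> *\<^sub>R dir (fst x) (snd x) \<in> open_square)
        \<and> sin (snd y) = dir (fst x) (snd x) \<bullet> tng (side (fst y)))"

text \<open>Phi_lambda = R_lambda o Phi, as its graph.\<close>
definition lambda_step :: "real \<Rightarrow> phase \<Rightarrow> phase \<Rightarrow> bool" where
  "lambda_step lam x y \<longleftrightarrow> (\<exists>\<theta>. billiard_step x (fst y, \<theta>) \<and> snd y = lam * \<theta>)"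

definition periodic_orbit :: "(phase \<Rightarrow> phase \<Rightarrow> bool) \<Rightarrow> phase list \<Rightarrow> bool" where
  "periodic_orbit F q \<longleftrightarrow> q \<noteq> [] \<and>
     (\<forall>i < length q. F (q ! i) (q ! (Suc i mod length q)))"

text \<open>The list has minimal length (the orbit is not traversed several times).\<close>
definition primitive :: "phase list \<Rightarrow> bool" where
  "primitive q \<longleftrightarrow> (\<forall>p. 0 < p \<and> p < length q \<longrightarrow>
      (\<exists>i < length q. q ! ((i + p) mod length q) \<noteq> q ! i))"

definition itinerary :: "phase list \<Rightarrow> nat list" where
  "itinerary q = map (\<lambda>x. side (fst x)) q"

text \<open>Cylinder of a periodic orbit q: all periodic orbits of Phi with the same itinerary
  and parallel to q (same angles at corresponding bounces).\<close>
definition cylinder_of :: "phase list \<Rightarrow> phase list set" where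
  "cylinder_of q = {q'. periodic_orbit billiard_step q' \<and> itinerary q' = itinerary q
                        \<and> map snd q' = map snd q}"

definition periodic_cylinder :: "phase list set \<Rightarrow> bool" where
  "periodic_cylinder C \<longleftrightarrow>
     (\<exists>q. periodic_orbit billiard_step q \<and> primitive q \<and> C = cylinder_of q)"

definition lambda_plus_stable :: "phase list \<Rightarrow> bool" where
  "lambda_plus_stable q \<longleftrightarrow>
     (\<exists>lam :: nat \<Rightarrow> real. \<exists>qs :: nat \<Rightarrow> phase list.
        (\<forall>n. lam (Suc n) < lam n) \<and> lam \<longlonglongrightarrow> 1 \<and> (\<forall>n. 0 < lam n) \<and>
        (\<forall>n. periodic_orbit (lambda_step (lam n)) (qs n) \<and> itinerary (qs n) = itinerary q) \<and>
        (\<forall>i < length q. (\<lambda>n. qs n ! i) \<longlonglongrightarrow> q ! i))"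

definition lambda_minus_stable :: "phase list \<Rightarrow> bool" where
  "lambda_minus_stable q \<longleftrightarrow>
     (\<exists>lam :: nat \<Rightarrow> real. \<exists>qs :: nat \<Rightarrow> phase list.
        (\<forall>n. lam n < lam (Suc n)) \<and> lam \<longlonglongrightarrow> 1 \<and> (\<forall>n. 0 < lam n) \<and>
        (\<forall>n. periodic_orbit (lambda_step (lam n)) (qs n) \<and> itinerary (qs n) = itinerary q) \<and>
        (\<forall>i < length q. (\<lambda>n. qs n ! i) \<longlonglongrightarrow> q ! i))"

definition lambda_stable_cylinder :: "phase list set \<Rightarrow> bool" where
  "lambda_stable_cylinder C \<longleftrightarrow>
     (\<exists>q\<in>C. lambda_plus_stable q) \<and> (\<exists>q\<in>C. lambda_minus_stable q)"

definition ping_pong_cylinder :: "phase list set \<Rightarrow> bool" where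
  "ping_pong_cylinder C \<longleftrightarrow> C \<noteq> {} \<and> (\<forall>q\<in>C. length q = 2 \<and> snd (q!0) = 0 \<and> snd (q!1) = 0
      \<and> nrm (side (fst (q!1))) = - nrm (side (fst (q!0))))"

definition fagnano_orbit :: "phase list \<Rightarrow> bool" where
  "fagnano_orbit q \<longleftrightarrow> (\<exists>m::nat. 1 \<le> m \<and> m < 4 \<and>
      (\<forall>k < length q. itinerary q ! (Suc k mod length q) mod 4 = (itinerary q ! k + m) mod 4))"

text \<open>Fagnano cylinder of period four with slope +-1 (|theta| = pi/4 at each bounce,
  the sides being axis parallel).\<close>
definition fagnano4_cylinder :: "phase list set \<Rightarrow> bool" where
  "fagnano4_cylinder C \<longleftrightarrow> C \<noteq> {} \<and> (\<forall>q\<in>C. fagnano_orbit q \<and> length q = 4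
      \<and> (\<forall>i<4. \<bar>snd (q!i)\<bar> = pi/4))"

end

theory Submission
  imports Defs
begin

text \<open>
  The slope angle psi of a trajectory (its angle with the horizontal, folded into [0, pi/2]) is
  invariant under the billiard map of the square. Unfolding a periodic orbit of total length T
  with L bounces, N_k of them on side k, gives T sin psi = 2 N_1 = 2 N_3 and
  T cos psi = 2 N_2 = 2 N_4. Under Phi_lambda the slope angle evolves affinely; summing this over
  a period of a nearby periodic orbit of Phi_lambda, lambda \<noteq> 1, and letting lambda tend
  to 1 gives L psi = (pi/2) (N_1 + N_3). Hence psi = (pi/2) N_1/(N_1 + N_4) while
  tan psi = N_1/N_4, and Niven's theorem leaves only psi \<in> {0, pi/4, pi/2}: perpendicular
  orbits, which are the ping-pong orbits, and orbits of slope +-1, which are the Fagnano orbits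
  of period four. Conversely, ping-pong orbits are periodic for every Phi_lambda, and the Fagnano
  orbit through the midpoints of the sides deforms into periodic orbits of Phi_lambda hitting
  every side at the angle (pi/2) lambda/(1 + lambda).
\<close>

section \<open>The billiard map of the square\<close>

definition nonvertex :: "real \<Rightarrow> bool" where
  "nonvertex s \<longleftrightarrow> 0 \<le> s \<and> s < 4 \<and> s \<notin> \<int>"

definition position :: "phase \<Rightarrow> real \<times> real" where
  "position x = bpt (fst x)"

definition velocity :: "phase \<Rightarrow> real \<times> real" where
  "velocity x = dir (fst x) (snd x)"

lemma nonvertex_cases:
  assumes "nonvertex s"
  shows "(0 < s \<and> s < 1 \<and> side s = 1 \<and> bpt s = (s, 0)) \<or>
         (1 < s \<and> s < 2 \<and> side s = 2 \<and> bpt s = (1, s - 1)) \<or>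
         (2 < s \<and> s < 3 \<and> side s = 3 \<and> bpt s = (3 - s, 1)) \<or>
         (3 < s \<and> s < 4 \<and> side s = 4 \<and> bpt s = (0, 4 - s))"
proof -
  have s: "0 \<le> s" "s < 4" "s \<noteq> 0" "s \<noteq> 1" "s \<noteq> 2" "s \<noteq> 3"
    using assms unfolding nonvertex_def by auto
  have fl: "of_int \<lfloor>s\<rfloor> \<le> s" "s < of_int \<lfloor>s\<rfloor> + 1"
    by linarith+
  then have "\<lfloor>s\<rfloor> = 0 \<or> \<lfloor>s\<rfloor> = 1 \<or> \<lfloor>s\<rfloor> = 2 \<or> \<lfloor>s\<rfloor> = 3"
    using s(1,2) by linarith
  then show ?thesis
    using s fl by (elim disjE) (auto simp: side_def bpt_def)
qed

lemma nonvertex_side: "nonvertex s \<Longrightarrow> side s \<in> {1, 2, 3, 4}"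
  using nonvertex_cases by blast

lemma nonvertexI:
  assumes "real k < s" "s < real k + 1" "k \<le> 3"
  shows "nonvertex s" "side s = k + 1"
proof -
  have "\<lfloor>s\<rfloor> = int k"
    using assms(1,2) by (simp add: floor_eq_iff)
  moreover have "s \<notin> \<int>"
    using assms(1,2) by (metis Ints_cases floor_of_int calculation less_irrefl of_int_of_nat_eq)
  ultimately show "nonvertex s" "side s = k + 1"
    using assms unfolding nonvertex_def side_def by simp_all
qed

lemma nonvertex_side_iff:
  "nonvertex s \<and> side s = j \<longleftrightarrow> j \<in> {1, 2, 3, 4} \<and> real j - 1 < s \<and> s < real j"
proof
  assume "nonvertex s \<and> side s = j"
  then show "j \<in> {1, 2, 3, 4} \<and> real j - 1 < s \<and> s < real j"
    using nonvertex_cases[of s] by auto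
next
  assume j: "j \<in> {1, 2, 3, 4} \<and> real j - 1 < s \<and> s < real j"
  then have "real (j - 1) < s" "s < real (j - 1) + 1" "j - 1 \<le> 3"
    by (auto simp: of_nat_diff)
  then show "nonvertex s \<and> side s = j"
    using nonvertexI[of "j - 1" s] j by auto
qed

lemma in_phase_iff: "in_phase x \<longleftrightarrow> nonvertex (fst x) \<and> \<bar>snd x\<bar> < pi/2"
  unfolding in_phase_def nonvertex_def by auto

lemma in_phase_cos_pos: "in_phase x \<Longrightarrow> 0 < cos (snd x)"
  unfolding in_phase_iff by (intro cos_gt_zero_pi) auto

lemma dir_side:
  "side s = 1 \<Longrightarrow> dir s \<theta> = (sin \<theta>, cos \<theta>)"
  "side s = 2 \<Longrightarrow> dir s \<theta> = (- cos \<theta>, sin \<theta>)"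
  "side s = 3 \<Longrightarrow> dir s \<theta> = (- sin \<theta>, - cos \<theta>)"
  "side s = 4 \<Longrightarrow> dir s \<theta> = (cos \<theta>, - sin \<theta>)"
  by (auto simp: dir_def nrm_def tng_def)

lemma norm_dir [simp]: "norm (dir s \<theta>) = 1"
  by (simp add: dir_def nrm_def tng_def norm_Pair power2_eq_square algebra_simps)

text \<open>Distance from the line through side k, signed so that it lies in [0, 1] on the square.\<close>
definition wall_dist :: "nat \<Rightarrow> real \<times> real \<Rightarrow> real" where
  "wall_dist k p = nrm k \<bullet> p + (if k = 2 \<or> k = 3 then 1 else 0)"

lemma wall_dist_add: "wall_dist k (p + v) = wall_dist k p + nrm k \<bullet> v"
  by (simp add: wall_dist_def inner_add_right)

lemma wall_dist_open_square:
  "p \<in> open_square \<Longrightarrow> k \<in> {1, 2, 3, 4} \<Longrightarrow> 0 < wall_dist k p \<and> wall_dist k p < 1"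
  by (cases p) (auto simp: open_square_def wall_dist_def nrm_def)

lemma wall_dist_bpt_zero_iff:
  "nonvertex s \<Longrightarrow> k \<in> {1, 2, 3, 4} \<Longrightarrow> wall_dist k (bpt s) = 0 \<longleftrightarrow> side s = k"
  using nonvertex_cases[of s] by (auto simp: wall_dist_def nrm_def)

lemma nrm_reflect_component:
  assumes "nonvertex s" "k \<in> {1, 2, 3, 4}"
  shows "nrm k \<bullet> (v - (2 * (v \<bullet> nrm (side s))) *\<^sub>R nrm (side s))
           = (if wall_dist k (bpt s) \<in> {0, 1} then - (nrm k \<bullet> v) else nrm k \<bullet> v)"
  using nonvertex_cases[OF assms(1)] assms(2)
  by (cases v) (auto simp: wall_dist_def nrm_def)

lemma billiard_step_in_phase: "billiard_step x y \<Longrightarrow> in_phase x \<and> in_phase y"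
  unfolding billiard_step_def by blast

lemma billiard_stepE:
  assumes "billiard_step x y"
  obtains t where "0 < t" "position y = position x + t *\<^sub>R velocity x"
    "position x + (t/2) *\<^sub>R velocity x \<in> open_square"
    "velocity x \<bullet> nrm (side (fst y)) < 0"
    "sin (snd y) = velocity x \<bullet> tng (side (fst y))"
    "in_phase x" "in_phase y"
proof -
  obtain t where t: "0 < t" "position y = position x + t *\<^sub>R velocity x"
      "\<forall>\<tau>. 0 < \<tau> \<and> \<tau> < t \<longrightarrow> position x + \<tau> *\<^sub>R velocity x \<in> open_square"
      "sin (snd y) = velocity x \<bullet> tng (side (fst y))" "in_phase x" "in_phase y"
    using assms unfolding billiard_step_def position_def velocity_def by blast
  let ?k = "side (fst y)"
  let ?m = "position x + (t/2) *\<^sub>R velocity x"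
  have m: "?m \<in> open_square" using t(1,3) by simp
  have k: "?k \<in> {1, 2, 3, 4}" using nonvertex_side t(6) by (simp add: in_phase_iff)
  have "position y = ?m + (t/2) *\<^sub>R velocity x"
    using t(2) by (simp add: algebra_simps flip: scaleR_add_left)
  then have "wall_dist ?k (position y) = wall_dist ?k ?m + (t/2) * (nrm ?k \<bullet> velocity x)"
    by (simp add: wall_dist_add)
  moreover have "wall_dist ?k (position y) = 0"
    using wall_dist_bpt_zero_iff k t(6) by (simp add: position_def in_phase_iff)
  ultimately have "(t/2) * (nrm ?k \<bullet> velocity x) < 0"
    using wall_dist_open_square[OF m k] by linarith
  then have "velocity x \<bullet> nrm ?k < 0"
    using t(1) by (simp add: mult_less_0_iff inner_commute)
  with t m show thesis using that by blast
qed

text \<open>The definition of the billiard map fixes only the tangential component of the outgoing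
  velocity; the condition cos theta > 0 fixes its normal component.\<close>
lemma billiard_step_reflect:
  assumes "billiard_step x y"
  shows "velocity y = velocity x - (2 * (velocity x \<bullet> nrm (side (fst y)))) *\<^sub>R nrm (side (fst y))"
proof -
  obtain t where st: "velocity x \<bullet> nrm (side (fst y)) < 0"
      "sin (snd y) = velocity x \<bullet> tng (side (fst y))" "in_phase y"
    using billiard_stepE[OF assms] by metis
  let ?k = "side (fst y)"
  let ?v = "velocity x"
  define a where "a = ?v \<bullet> nrm ?k"
  define b where "b = ?v \<bullet> tng ?k"
  have k: "?k \<in> {1, 2, 3, 4}" using nonvertex_side st(3) by (simp add: in_phase_iff)
  have basis: "?v = a *\<^sub>R nrm ?k + b *\<^sub>R tng ?k"
    using k unfolding a_def b_def by (cases ?v) (auto simp: nrm_def tng_def)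
  have "a\<^sup>2 + b\<^sup>2 = 1"
    using k norm_dir[of "fst x" "snd x"] unfolding a_def b_def velocity_def
    by (cases "dir (fst x) (snd x)") (auto simp: nrm_def tng_def norm_Pair power2_eq_square)
  moreover have "(sin (snd y))\<^sup>2 = b\<^sup>2"
    using st(2) by (simp add: b_def)
  ultimately have "(cos (snd y))\<^sup>2 = a\<^sup>2"
    using sin_cos_squared_add[of "snd y"] by linarith
  then have "cos (snd y) = - a"
    using in_phase_cos_pos[OF st(3)] st(1) unfolding a_def
    by (metis power2_eq_iff neg_0_less_iff_less less_asym inner_commute)
  then have "velocity y = - a *\<^sub>R nrm ?k + b *\<^sub>R tng ?k"
    using st(2) by (simp add: velocity_def dir_def b_def)
  also have "\<dots> = (a *\<^sub>R nrm ?k + b *\<^sub>R tng ?k) - (2 * a) *\<^sub>R nrm ?k"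
    by (simp add: algebra_simps flip: scaleR_add_left)
  also have "\<dots> = ?v - (2 * a) *\<^sub>R nrm ?k"
    by (simp only: basis[symmetric])
  finally show ?thesis
    by (simp add: a_def)
qed

lemma abs_nrm_velocity_step:
  assumes "billiard_step x y" "k \<in> {1, 2, 3, 4}"
  shows "\<bar>nrm k \<bullet> velocity y\<bar> = \<bar>nrm k \<bullet> velocity x\<bar>"
proof -
  have "nonvertex (fst y)"
    using billiard_step_in_phase[OF assms(1)] by (simp add: in_phase_iff)
  then show ?thesis
    using nrm_reflect_component[OF _ assms(2)] billiard_step_reflect[OF assms(1)]
    by (simp add: position_def)
qed

section \<open>The slope angle\<close>

definition horizontal_side :: "nat \<Rightarrow> bool" where
  "horizontal_side k \<longleftrightarrow> k = 1 \<or> k = 3"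

text \<open>The angle between the trajectory and the horizontal axis, folded into [0, pi/2].\<close>
definition slope_angle :: "phase \<Rightarrow> real" where
  "slope_angle x = (if horizontal_side (side (fst x)) then pi/2 - \<bar>snd x\<bar> else \<bar>snd x\<bar>)"

lemma slope_angle_bounds: "in_phase x \<Longrightarrow> 0 \<le> slope_angle x \<and> slope_angle x \<le> pi/2"
  by (auto simp: slope_angle_def in_phase_iff)

lemma abs_velocity_slope_angle:
  assumes "in_phase x"
  shows "\<bar>nrm 4 \<bullet> velocity x\<bar> = cos (slope_angle x)" "\<bar>nrm 1 \<bullet> velocity x\<bar> = sin (slope_angle x)"
proof -
  let ?\<theta> = "snd x"
  have "\<bar>?\<theta>\<bar> < pi/2" using assms by (simp add: in_phase_iff)
  then have "0 \<le> sin \<bar>?\<theta>\<bar>"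
    by (intro sin_ge_zero) auto
  moreover have "sin \<bar>?\<theta>\<bar> = sin ?\<theta> \<or> sin \<bar>?\<theta>\<bar> = - sin ?\<theta>"
    by (cases "0 \<le> ?\<theta>") auto
  ultimately have sin: "\<bar>sin ?\<theta>\<bar> = sin \<bar>?\<theta>\<bar>"
    by auto
  have cos: "\<bar>cos ?\<theta>\<bar> = cos \<bar>?\<theta>\<bar>"
    using in_phase_cos_pos[OF assms] by simp
  have "side (fst x) \<in> {1, 2, 3, 4}"
    using assms nonvertex_side by (simp add: in_phase_iff)
  then have "\<bar>nrm 4 \<bullet> velocity x\<bar> = (if horizontal_side (side (fst x)) then \<bar>sin ?\<theta>\<bar> else \<bar>cos ?\<theta>\<bar>)
      \<and> \<bar>nrm 1 \<bullet> velocity x\<bar> = (if horizontal_side (side (fst x)) then \<bar>cos ?\<theta>\<bar> else \<bar>sin ?\<theta>\<bar>)"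
    by (elim insertE emptyE) (simp_all add: horizontal_side_def velocity_def dir_side nrm_def)
  moreover have "cos (pi/2 - \<bar>?\<theta>\<bar>) = sin \<bar>?\<theta>\<bar>"
    by (simp add: sin_cos_eq)
  moreover have "sin (pi/2 - \<bar>?\<theta>\<bar>) = cos \<bar>?\<theta>\<bar>"
    by (simp add: cos_sin_eq)
  ultimately show "\<bar>nrm 4 \<bullet> velocity x\<bar> = cos (slope_angle x)" "\<bar>nrm 1 \<bullet> velocity x\<bar> = sin (slope_angle x)"
    using sin cos by (simp_all add: slope_angle_def)
qed

lemma slope_angle_billiard_step:
  assumes "billiard_step x y"
  shows "slope_angle y = slope_angle x"
proof -
  have ph: "in_phase x" "in_phase y" using billiard_step_in_phase[OF assms] by simp_all
  have "cos (slope_angle y) = \<bar>nrm 4 \<bullet> velocity y\<bar>"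
    by (rule abs_velocity_slope_angle(1)[OF ph(2), symmetric])
  also have "\<dots> = \<bar>nrm 4 \<bullet> velocity x\<bar>"
    by (rule abs_nrm_velocity_step[OF assms]) simp
  also have "\<dots> = cos (slope_angle x)"
    by (rule abs_velocity_slope_angle(1)[OF ph(1)])
  finally show ?thesis
    by (rule cos_inj_pi[rotated 4])
      (use slope_angle_bounds[OF ph(1)] slope_angle_bounds[OF ph(2)] pi_gt_zero in linarith)+
qed

lemma slope_angle_lambda_step:
  assumes "0 < lam" "lambda_step lam x y"
  shows "slope_angle y = lam * slope_angle x + (1 - lam) * (pi/2) * of_bool (horizontal_side (side (fst y)))"
proof -
  obtain \<theta> where st: "billiard_step x (fst y, \<theta>)" and y: "snd y = lam * \<theta>"
    using assms(2) unfolding lambda_step_def by blast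
  have x: "slope_angle (fst y, \<theta>) = slope_angle x"
    by (rule slope_angle_billiard_step[OF st])
  have "\<bar>snd y\<bar> = lam * \<bar>\<theta>\<bar>"
    using y assms(1) by (simp add: abs_mult)
  show ?thesis
  proof (cases "horizontal_side (side (fst y))")
    case True
    then have "\<bar>\<theta>\<bar> = pi/2 - slope_angle x"
      using x by (simp add: slope_angle_def[of "(fst y, \<theta>)"])
    then have "slope_angle y = pi/2 - lam * (pi/2 - slope_angle x)"
      using True \<open>\<bar>snd y\<bar> = lam * \<bar>\<theta>\<bar>\<close> by (simp add: slope_angle_def[of y])
    then show ?thesis
      using True by (simp add: field_simps)
  next
    case False
    then show ?thesis
      using x \<open>\<bar>snd y\<bar> = lam * \<bar>\<theta>\<bar>\<close>
      by (simp add: slope_angle_def[of y] slope_angle_def[of "(fst y, \<theta>)"])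
  qed
qed

section \<open>Unfolding periodic orbits\<close>

text \<open>The coordinate p \<in> [0, 1] of a point moving with velocity component d, read in the
  unfolding that turns reflections at 0 and 1 into translation on the circle of length 2;
  a bounce at 0 is a wrap-around.\<close>
definition unfolded_coord :: "real \<Rightarrow> real \<Rightarrow> real" where
  "unfolded_coord p d = (if 0 \<le> d then p else 2 - p)"

lemma unfolded_coord_step:
  assumes "0 < t" "0 < p + (t/2) * d" "p + (t/2) * d < 1"
    and "e = (if p + t * d \<in> {0, 1} then - d else d)"
  shows "unfolded_coord (p + t * d) e - unfolded_coord p d + 2 * of_bool (p + t * d = 0) = t * \<bar>d\<bar>"
proof -
  have "p + t * d = 0 \<Longrightarrow> t * d < 0" "p + t * d = 1 \<Longrightarrow> 0 < t * d"
    using assms(2,3) by linarith+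
  then have "p + t * d = 0 \<Longrightarrow> d < 0" "p + t * d = 1 \<Longrightarrow> 0 < d"
    using assms(1) by (simp_all add: mult_less_0_iff zero_less_mult_iff)
  then show ?thesis
    using assms(1,4) by (auto simp: unfolded_coord_def abs_if algebra_simps)
qed

lemma wall_count_step:
  assumes "billiard_step x y" "k \<in> {1, 2, 3, 4}"
  shows "unfolded_coord (wall_dist k (position y)) (nrm k \<bullet> velocity y)
      - unfolded_coord (wall_dist k (position x)) (nrm k \<bullet> velocity x)
      + 2 * of_bool (side (fst y) = k)
    = dist (position x) (position y) * \<bar>nrm k \<bullet> velocity x\<bar>"
proof -
  obtain t where st: "0 < t" "position y = position x + t *\<^sub>R velocity x"
      "position x + (t/2) *\<^sub>R velocity x \<in> open_square" "in_phase y"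
    using billiard_stepE[OF assms(1)] by metis
  let ?p = "wall_dist k (position x)"
  let ?d = "nrm k \<bullet> velocity x"
  have y: "nonvertex (fst y)" using st(4) by (simp add: in_phase_iff)
  have q: "wall_dist k (position y) = ?p + t * ?d"
    using st(2) by (simp add: wall_dist_add)
  have m: "0 < ?p + (t/2) * ?d" "?p + (t/2) * ?d < 1"
    using wall_dist_open_square[OF st(3) assms(2)] by (simp_all add: wall_dist_add)
  have e: "nrm k \<bullet> velocity y = (if ?p + t * ?d \<in> {0, 1} then - ?d else ?d)"
    using nrm_reflect_component[OF y assms(2)] billiard_step_reflect[OF assms(1)] q
    by (simp add: position_def)
  have "side (fst y) = k \<longleftrightarrow> ?p + t * ?d = 0"
    using wall_dist_bpt_zero_iff[OF y assms(2)] q by (simp add: position_def)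
  moreover have "dist (position x) (position y) = t"
    using st(1,2) by (simp add: dist_norm velocity_def)
  ultimately show ?thesis
    using unfolded_coord_step[OF st(1) m e] q by simp
qed

lemma periodic_orbit_step:
  "periodic_orbit F q \<Longrightarrow> i < length q \<Longrightarrow> F (q ! i) (q ! (Suc i mod length q))"
  unfolding periodic_orbit_def by blast

lemma periodic_orbit_length_pos: "periodic_orbit F q \<Longrightarrow> 0 < length q"
  unfolding periodic_orbit_def by simp

lemma billiard_orbit_in_phase:
  "periodic_orbit billiard_step q \<Longrightarrow> i < length q \<Longrightarrow> in_phase (q ! i)"
  using periodic_orbit_step billiard_step_in_phase by blast

lemma sum_lessThan_Suc_mod:
  fixes f :: "nat \<Rightarrow> 'a::comm_monoid_add"
  assumes "0 < L"
  shows "(\<Sum>i<L. f (Suc i mod L)) = (\<Sum>i<L. f i)"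
proof -
  obtain m where L: "L = Suc m" using assms by (cases L) auto
  have "(\<Sum>i<Suc m. f (Suc i mod Suc m)) = (\<Sum>i<m. f (Suc i)) + f 0"
    by (simp add: sum.lessThan_Suc)
  also have "\<dots> = (\<Sum>i<Suc m. f i)"
    by (subst sum.lessThan_Suc_shift) (simp add: add.commute)
  finally show ?thesis using L by simp
qed

lemma periodic_orbit_invariant:
  assumes "periodic_orbit F q" "\<And>x y. F x y \<Longrightarrow> g y = g x" "i < length q"
  shows "g (q ! i) = g (q ! 0)"
  using assms(3)
proof (induction i)
  case (Suc i)
  then show ?case
    using assms(2)[OF periodic_orbit_step[OF assms(1), of i]] by simp
qed simp

definition side_count :: "phase list \<Rightarrow> nat \<Rightarrow> nat" where
  "side_count q k = card {i. i < length q \<and> side (fst (q ! i)) = k}"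

definition orbit_length :: "phase list \<Rightarrow> real" where
  "orbit_length q = (\<Sum>i<length q. dist (position (q ! i)) (position (q ! (Suc i mod length q))))"

lemma sum_of_bool_side:
  "(\<Sum>i<length q. of_bool (side (fst (q ! i)) = k)) = real (side_count q k)"
proof -
  have "{..<length q} \<inter> {i. side (fst (q ! i)) = k} = {i. i < length q \<and> side (fst (q ! i)) = k}"
    by auto
  then show ?thesis by (simp add: side_count_def)
qed

lemma sum_of_bool_horizontal_side:
  "(\<Sum>i<length q. of_bool (horizontal_side (side (fst (q ! i))))) = real (side_count q 1 + side_count q 3)"
proof -
  have "(\<Sum>i<length q. of_bool (horizontal_side (side (fst (q ! i)))))
      = (\<Sum>i<length q. of_bool (side (fst (q ! i)) = 1) + of_bool (side (fst (q ! i)) = 3) :: real)"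
    by (intro sum.cong) (auto simp: horizontal_side_def)
  then show ?thesis
    by (simp only: sum.distrib sum_of_bool_side of_nat_add)
qed

lemma side_count_sum:
  assumes "periodic_orbit billiard_step q"
  shows "length q = side_count q 1 + side_count q 2 + side_count q 3 + side_count q 4"
proof -
  have "(\<Sum>i<length q. (\<Sum>k\<in>{1,2,3,4}. of_bool (side (fst (q ! i)) = k))) = (\<Sum>i<length q. 1::real)"
  proof (intro sum.cong refl)
    fix i assume "i \<in> {..<length q}"
    then have "side (fst (q ! i)) \<in> {1, 2, 3, 4}"
      using nonvertex_side billiard_orbit_in_phase[OF assms] by (simp add: in_phase_iff)
    then show "(\<Sum>k\<in>{1,2,3,4}. of_bool (side (fst (q ! i)) = k)) = (1::real)"
      by auto
  qed
  then have "real (length q) = (\<Sum>k\<in>{1,2,3,4}. real (side_count q k))"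
    by (simp only: sum.swap[of _ "{1,2,3,4}"] sum_of_bool_side) simp
  then show ?thesis
    by simp
qed

text \<open>Summing the unfolded displacement over a period: the unfolded coordinate returns to its
  initial value, so the total distance travelled towards side k is twice the number of hits.\<close>
lemma orbit_length_side_count:
  assumes "periodic_orbit billiard_step q" "k \<in> {1, 2, 3, 4}"
  shows "orbit_length q * \<bar>nrm k \<bullet> velocity (q ! 0)\<bar> = 2 * side_count q k"
proof -
  let ?L = "length q"
  let ?u = "\<lambda>i. unfolded_coord (wall_dist k (position (q ! i))) (nrm k \<bullet> velocity (q ! i))"
  have L: "0 < ?L" using periodic_orbit_length_pos[OF assms(1)] .
  have "orbit_length q * \<bar>nrm k \<bullet> velocity (q ! 0)\<bar>
      = (\<Sum>i<?L. ?u (Suc i mod ?L) - ?u i + 2 * of_bool (side (fst (q ! (Suc i mod ?L))) = k))"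
    unfolding orbit_length_def sum_distrib_right
  proof (intro sum.cong refl)
    fix i assume "i \<in> {..<?L}"
    then have i: "i < ?L" by simp
    have "\<bar>nrm k \<bullet> velocity (q ! i)\<bar> = \<bar>nrm k \<bullet> velocity (q ! 0)\<bar>"
      by (rule periodic_orbit_invariant[OF assms(1) _ i]) (rule abs_nrm_velocity_step[OF _ assms(2)])
    then show "dist (position (q ! i)) (position (q ! (Suc i mod ?L))) * \<bar>nrm k \<bullet> velocity (q ! 0)\<bar>
        = ?u (Suc i mod ?L) - ?u i + 2 * of_bool (side (fst (q ! (Suc i mod ?L))) = k)"
      using wall_count_step[OF periodic_orbit_step[OF assms(1) i] assms(2)] by simp
  qed
  also have "\<dots> = (\<Sum>i<?L. ?u (Suc i mod ?L)) - (\<Sum>i<?L. ?u i)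
      + 2 * (\<Sum>i<?L. of_bool (side (fst (q ! (Suc i mod ?L))) = k))"
    by (simp only: sum.distrib sum_subtractf sum_distrib_left)
  also have "\<dots> = 2 * (\<Sum>i<?L. of_bool (side (fst (q ! i)) = k))"
    by (simp only: sum_lessThan_Suc_mod[OF L, of ?u]
        sum_lessThan_Suc_mod[OF L, of "\<lambda>i. of_bool (side (fst (q ! i)) = k)"])
  finally show ?thesis
    by (simp only: sum_of_bool_side)
qed

section \<open>Niven's theorem\<close>

lemma three_dvd_square: "(3::nat) dvd x\<^sup>2 \<Longrightarrow> 3 dvd x"
proof -
  assume "3 dvd x\<^sup>2"
  moreover have "x\<^sup>2 mod 3 = (x mod 3)\<^sup>2 mod 3" by (simp add: power_mod)
  moreover have "x mod 3 = 0 \<or> x mod 3 = 1 \<or> x mod 3 = 2" by linarith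
  ultimately show "3 dvd x" by auto
qed

lemma square_eq_three_square: "(x::nat)\<^sup>2 = 3 * y\<^sup>2 \<Longrightarrow> y = 0"
proof (induction y arbitrary: x rule: less_induct)
  case (less y x)
  show ?case
  proof (rule ccontr)
    assume y: "y \<noteq> 0"
    obtain z where z: "x = 3 * z" using three_dvd_square less.prems by (metis dvd_def dvd_triv_left)
    then have "y\<^sup>2 = 3 * z\<^sup>2" using less.prems by (simp add: power_mult_distrib)
    moreover obtain w where w: "y = 3 * w" using three_dvd_square calculation by (metis dvd_def dvd_triv_left)
    ultimately have "z\<^sup>2 = 3 * w\<^sup>2" by (simp add: power_mult_distrib)
    then have "w = 0" using less.IH[of w z] w y by simp
    then show False using w y by simp
  qed
qed

text \<open>Numerators of the iterates of c \<mapsto> c^2 - 2 started at p/q, over the denominators q^(2^k).\<close>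
fun sq_minus_two_numer :: "int \<Rightarrow> int \<Rightarrow> nat \<Rightarrow> int" where
  "sq_minus_two_numer p q 0 = p"
| "sq_minus_two_numer p q (Suc k) = (sq_minus_two_numer p q k)\<^sup>2 - 2 * q ^ (2 ^ Suc k)"

lemma coprime_sq_minus_two_numer:
  "coprime p q \<Longrightarrow> coprime (sq_minus_two_numer p q k) q"
proof (induction k)
  case (Suc k)
  have c: "coprime ((sq_minus_two_numer p q k)\<^sup>2) q" using Suc by simp
  show ?case
  proof (rule coprimeI)
    fix d assume d: "d dvd sq_minus_two_numer p q (Suc k)" "d dvd q"
    then have "d dvd 2 * q ^ (2 ^ Suc k)"
      using dvd_trans[OF d(2) dvd_power[of "2 ^ Suc k" q]] by (simp add: dvd_mult)
    then have "d dvd (sq_minus_two_numer p q k)\<^sup>2"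
      using d(1) by (metis sq_minus_two_numer.simps(2) diff_add_cancel dvd_add)
    then show "is_unit d" using c d(2) coprime_common_divisor by blast
  qed
qed simp

lemma sq_minus_two_iterate:
  fixes c :: "nat \<Rightarrow> real"
  assumes "q \<noteq> 0" "c 0 = p / q" "\<And>k. c (Suc k) = (c k)\<^sup>2 - 2"
  shows "c k = sq_minus_two_numer p q k / q ^ (2 ^ k)"
proof (induction k)
  case (Suc k)
  have "(real_of_int q) ^ (2 ^ Suc k) = (real_of_int q) ^ (2 ^ k) * (real_of_int q) ^ (2 ^ k)"
    by (simp add: mult_2 power_add)
  then show ?case
    using assms(1) unfolding assms(3) Suc by (simp add: field_simps power2_eq_square)
qed (use assms in simp)

text \<open>A rational starting value whose orbit under c \<mapsto> c^2 - 2 returns to an earlier value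
  must be an integer: a reduced denominator q > 1 would turn into q^(2^k).\<close>
lemma sq_minus_two_orbit_Ints:
  fixes c :: "nat \<Rightarrow> real"
  assumes rec: "\<And>k. c (Suc k) = (c k)\<^sup>2 - 2" and "c 0 \<in> \<rat>" and "j < k" "c j = c k"
  shows "c 0 \<in> \<int>"
proof -
  obtain p q where pq: "q > 0" "coprime p q" "c 0 = of_int p / of_int q"
    using Rats_cases'[OF assms(2)] by blast
  have "q = 1"
  proof (rule ccontr)
    assume "q \<noteq> 1"
    have cq: "c i = sq_minus_two_numer p q i / q ^ (2 ^ i)" for i
      using sq_minus_two_iterate[of q c p i] pq(1,3) rec by simp
    obtain e where e: "(2::nat) ^ k = 2 ^ j + e" "0 < e"
      using assms(3) by (metis less_imp_add_positive power_strict_increasing_iff one_less_numeral_iff semiring_norm(76))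
    have "real_of_int (sq_minus_two_numer p q j * q ^ e) * real_of_int q ^ (2 ^ j)
        = real_of_int (sq_minus_two_numer p q k) * real_of_int q ^ (2 ^ j)"
      using assms(4) pq(1) e(1) unfolding cq by (simp add: field_simps power_add)
    then have "sq_minus_two_numer p q j * q ^ e = sq_minus_two_numer p q k"
      using pq(1) by (simp flip: of_int_power of_int_mult)
    then have "q dvd sq_minus_two_numer p q k"
      using e(2) by (metis dvd_mult dvd_power dvd_refl)
    then have "\<bar>q\<bar> = 1"
      using coprime_common_divisor_int[OF coprime_sq_minus_two_numer[OF pq(2), of k]] by simp
    then show False
      using \<open>q \<noteq> 1\<close> pq(1) by simp
  qed
  then show ?thesis using pq(3) by simp
qed

lemma finite_range_two_cos_pow2:
  fixes m n :: nat
  assumes "0 < n"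
  shows "finite (range (\<lambda>k::nat. 2 * cos (2 ^ k * (pi * m / n))))"
proof -
  define S where "S = (\<lambda>r::nat. 2 * cos (pi * r / n)) ` {..<2 * n}"
  have "2 * cos (2 ^ k * (pi * m / n)) \<in> S" for k
  proof -
    define r where "r = (m * 2 ^ k) mod (2 * n)"
    define t where "t = (m * 2 ^ k) div (2 * n)"
    have "m * 2 ^ k = 2 * n * t + r"
      unfolding r_def t_def by simp
    then have "real m * 2 ^ k = real (2 * n * t + r)"
      by (metis of_nat_mult of_nat_numeral of_nat_power)
    then have "2 ^ k * (pi * m / n) = pi * real (2 * n * t + r) / n"
      by (simp add: field_simps)
    also have "\<dots> = pi * r / n + 2 * real t * pi"
      using assms by (simp add: field_simps)
    finally have "2 * cos (2 ^ k * (pi * m / n)) = 2 * cos (pi * r / n)"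
      by (simp add: cos_add)
    moreover have "r < 2 * n" unfolding r_def using assms by simp
    ultimately show ?thesis unfolding S_def by blast
  qed
  then have "range (\<lambda>k::nat. 2 * cos (2 ^ k * (pi * m / n))) \<subseteq> S"
    by blast
  moreover have "finite S"
    unfolding S_def by simp
  ultimately show ?thesis
    by (rule finite_subset)
qed

text \<open>The values c_k = 2 cos (2^k x) satisfy c_(k+1) = c_k^2 - 2 and range over a finite set.\<close>
lemma two_cos_rat_pi_Ints:
  fixes m n :: nat
  assumes "0 < n" "2 * cos (pi * m / n) \<in> \<rat>"
  shows "2 * cos (pi * m / n) \<in> \<int>"
proof -
  define c where "c k = 2 * cos (2 ^ k * (pi * m / n))" for k :: nat
  have rec: "c (Suc k) = (c k)\<^sup>2 - 2" for k
  proof -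
    have "c (Suc k) = 2 * cos (2 * (2 ^ k * (pi * m / n)))" unfolding c_def by (simp add: mult.assoc)
    then show ?thesis unfolding cos_double_cos c_def by (simp add: power2_eq_square)
  qed
  have "\<not> inj c"
  proof
    assume "inj c"
    then have "finite (UNIV :: nat set)"
      using finite_range_two_cos_pow2[OF assms(1), of m] finite_imageD[of c UNIV]
      unfolding c_def by blast
    then show False by simp
  qed
  then obtain j k where jk: "j < k" "c j = c k"
    unfolding inj_def by (metis linorder_neqE_nat)
  have "c 0 \<in> \<rat>"
    using assms(2) by (simp add: c_def)
  then have "c 0 \<in> \<int>"
    by (rule sq_minus_two_orbit_Ints[OF rec _ jk])
  then show ?thesis by (simp add: c_def)
qed

lemma square_ratio_not_Ints:
  fixes a b :: nat
  assumes a: "0 < a" and b: "0 < b" and ne: "a \<noteq> b"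
  shows "2 * (real b ^ 2 - real a ^ 2) / (real a ^ 2 + real b ^ 2) \<notin> \<int>"
proof
  define A B where "A = real a ^ 2" and "B = real b ^ 2"
  have A: "0 < A" and B: "0 < B" using a b unfolding A_def B_def by simp_all
  assume "2 * (real b ^ 2 - real a ^ 2) / (real a ^ 2 + real b ^ 2) \<in> \<int>"
  then obtain c :: int where "2 * (B - A) / (A + B) = c"
    unfolding A_def B_def by (metis Ints_cases)
  then have c: "2 * (B - A) = c * (A + B)"
    using A B by (simp add: divide_eq_eq)
  have "\<bar>2 * (B - A)\<bar> \<le> 2 * (A + B)"
    using A B by (simp add: abs_le_iff)
  then have "\<bar>c\<bar> * (A + B) \<le> 2 * (A + B)"
    using A B unfolding c by (simp add: abs_mult)
  then have "real_of_int \<bar>c\<bar> \<le> 2"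
    by (rule mult_right_le_imp_le) (use A B in simp)
  then have "\<bar>c\<bar> \<le> 2"
    by linarith
  then have "c = -2 \<or> c = -1 \<or> c = 0 \<or> c = 1 \<or> c = 2"
    by auto
  then show False
  proof (elim disjE)
    assume "c = -2"
    then show False using c B by simp
  next
    assume "c = 2"
    then show False using c A by simp
  next
    assume "c = 0"
    then have "real a ^ 2 = real b ^ 2" using c unfolding A_def B_def by simp
    then show False using ne by simp
  next
    assume "c = 1"
    then have "real (b\<^sup>2) = real (3 * a\<^sup>2)" using c unfolding A_def B_def by simp
    then show False using square_eq_three_square a by (simp only: of_nat_eq_iff) blast
  next
    assume "c = -1"
    then have "real (a\<^sup>2) = real (3 * b\<^sup>2)" using c unfolding A_def B_def by simp
    then show False using square_eq_three_square b by (simp only: of_nat_eq_iff) blast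
  qed
qed

text \<open>If tan psi = a/b and psi = (pi/2) a/(a + b), then 2 cos (2 psi) is rational, hence an
  integer by Niven's theorem.\<close>
lemma rational_slope_degenerate:
  fixes a b :: nat and \<psi> :: real
  assumes "0 < a + b" "\<psi> * (a + b) = (pi/2) * a" "a * cos \<psi> = b * sin \<psi>"
  shows "a = 0 \<or> b = 0 \<or> a = b"
proof (rule ccontr)
  assume "\<not> ?thesis"
  then have a: "0 < a" and b: "0 < b" and ne: "a \<noteq> b" by auto
  define A B where "A = real a ^ 2" and "B = real b ^ 2"
  have A: "0 < A" and B: "0 < B" using a b unfolding A_def B_def by simp_all
  have "0 < real a + real b" using a by simp
  then have \<psi>: "2 * \<psi> = pi * a / (a + b)"
    using assms(2) by (simp add: eq_divide_eq algebra_simps)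
  have "A * (cos \<psi>)\<^sup>2 = B * (sin \<psi>)\<^sup>2"
    using arg_cong[OF assms(3), of "\<lambda>u. u\<^sup>2"] unfolding A_def B_def by (simp add: power_mult_distrib)
  then have "(cos \<psi>)\<^sup>2 * (A + B) = B"
    using sin_squared_eq[of \<psi>] by algebra
  then have cos2: "2 * cos (pi * a / (a + b)) = 2 * (B - A) / (A + B)"
    using A B unfolding \<psi>[symmetric] cos_double_cos by (simp add: field_simps)
  have "2 * cos (pi * a / (a + b)) \<in> \<rat>"
    unfolding cos2 A_def B_def by simp
  then have "2 * cos (pi * a / (a + b)) \<in> \<int>"
    using two_cos_rat_pi_Ints[of "a + b" a] assms(1) by simp
  then show False
    using square_ratio_not_Ints[OF a b ne] unfolding cos2 A_def B_def by simp
qed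

section \<open>Slope angles of lambda-stable orbits\<close>

text \<open>Summing the affine recursion of the slope angle over a period eliminates lambda.\<close>
lemma slope_angle_sum_lambda_orbit:
  assumes "0 < lam" "lam \<noteq> 1" "periodic_orbit (lambda_step lam) q"
  shows "(\<Sum>i<length q. slope_angle (q ! i))
       = pi/2 * (\<Sum>i<length q. of_bool (horizontal_side (side (fst (q ! i)))))"
proof -
  let ?L = "length q"
  let ?s = "\<lambda>i. slope_angle (q ! i)"
  let ?h = "\<lambda>i. of_bool (horizontal_side (side (fst (q ! i)))) :: real"
  have L: "0 < ?L" using periodic_orbit_length_pos[OF assms(3)] .
  have "(\<Sum>i<?L. ?s i) = (\<Sum>i<?L. ?s (Suc i mod ?L))"
    by (rule sum_lessThan_Suc_mod[OF L, symmetric])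
  also have "\<dots> = (\<Sum>i<?L. lam * ?s i + (1 - lam) * (pi/2) * ?h (Suc i mod ?L))"
    using slope_angle_lambda_step[OF assms(1) periodic_orbit_step[OF assms(3)]] by simp
  also have "\<dots> = lam * (\<Sum>i<?L. ?s i) + (1 - lam) * (pi/2) * (\<Sum>i<?L. ?h (Suc i mod ?L))"
    by (simp only: sum.distrib flip: sum_distrib_left)
  also have "\<dots> = lam * (\<Sum>i<?L. ?s i) + (1 - lam) * (pi/2) * (\<Sum>i<?L. ?h i)"
    by (simp only: sum_lessThan_Suc_mod[OF L, of ?h])
  finally have "(1 - lam) * (\<Sum>i<?L. ?s i) = (1 - lam) * (pi/2 * (\<Sum>i<?L. ?h i))"
    by algebra
  then show ?thesis
    using assms(2) by (simp only: mult_cancel_left) simp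
qed

lemma slope_angle_tendsto:
  assumes "X \<longlonglongrightarrow> x" "\<And>n. side (fst (X n)) = side (fst x)"
  shows "(\<lambda>n. slope_angle (X n)) \<longlonglongrightarrow> slope_angle x"
proof -
  have "(\<lambda>n. \<bar>snd (X n)\<bar>) \<longlonglongrightarrow> \<bar>snd x\<bar>"
    by (intro tendsto_rabs tendsto_snd assms(1))
  then show ?thesis
    unfolding slope_angle_def assms(2) by (cases "horizontal_side (side (fst x))") (simp_all add: tendsto_diff)
qed

lemma itinerary_eq_length: "itinerary q' = itinerary q \<Longrightarrow> length q' = length q"
  unfolding itinerary_def by (metis length_map)

lemma itinerary_eq_side:
  "itinerary q' = itinerary q \<Longrightarrow> i < length q \<Longrightarrow> side (fst (q' ! i)) = side (fst (q ! i))"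
  unfolding itinerary_def by (metis length_map nth_map)

lemma decseq_tendsto_one_gt:
  fixes lam :: "nat \<Rightarrow> real"
  assumes "\<forall>n. lam (Suc n) < lam n" "lam \<longlonglongrightarrow> 1"
  shows "1 < lam n"
proof -
  have "decseq lam" using assms(1) by (intro decseq_SucI) (simp add: less_imp_le)
  then have "1 \<le> lam (Suc n)" using decseq_ge assms(2) by blast
  then show ?thesis using assms(1) by (meson le_less_trans)
qed

lemma lambda_plus_stable_closing:
  assumes "periodic_orbit billiard_step q" "lambda_plus_stable q"
  shows "length q * slope_angle (q ! 0) = pi/2 * (side_count q 1 + side_count q 3)"
proof -
  let ?L = "length q"
  let ?h = "\<lambda>i. of_bool (horizontal_side (side (fst (q ! i)))) :: real"
  obtain lam qs where lam: "\<forall>n. lam (Suc n) < lam n" "lam \<longlonglongrightarrow> 1" "\<forall>n. 0 < lam n"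
    and qs: "\<forall>n. periodic_orbit (lambda_step (lam n)) (qs n) \<and> itinerary (qs n) = itinerary q"
    and conv: "\<forall>i < ?L. (\<lambda>n. qs n ! i) \<longlonglongrightarrow> q ! i"
    using assms(2) unfolding lambda_plus_stable_def by blast
  have len: "length (qs n) = ?L" for n using qs itinerary_eq_length by blast
  have sides: "i < ?L \<Longrightarrow> side (fst (qs n ! i)) = side (fst (q ! i))" for n i
    using qs itinerary_eq_side by blast
  have const: "(\<Sum>i<?L. slope_angle (qs n ! i)) = pi/2 * (\<Sum>i<?L. ?h i)" for n
  proof -
    have "lam n \<noteq> 1" using decseq_tendsto_one_gt[OF lam(1,2)] by (metis less_irrefl)
    then show ?thesis
      using slope_angle_sum_lambda_orbit[of "lam n" "qs n"] lam(3) qs len sides by simp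
  qed
  have "(\<lambda>n. \<Sum>i<?L. slope_angle (qs n ! i)) \<longlonglongrightarrow> (\<Sum>i<?L. slope_angle (q ! i))"
    using conv sides by (intro tendsto_sum slope_angle_tendsto) auto
  then have "pi/2 * (\<Sum>i<?L. ?h i) = (\<Sum>i<?L. slope_angle (q ! i))"
    unfolding const by (rule LIMSEQ_unique[OF tendsto_const])
  moreover have "(\<Sum>i<?L. slope_angle (q ! i)) = ?L * slope_angle (q ! 0)"
    using periodic_orbit_invariant[of billiard_step q slope_angle] assms(1) slope_angle_billiard_step
    by simp
  moreover have "(\<Sum>i<?L. ?h i) = real (side_count q 1 + side_count q 3)"
    by (rule sum_of_bool_horizontal_side)
  ultimately show ?thesis
    by simp
qed

lemma side_counts_slope_angle:
  assumes "periodic_orbit billiard_step q"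
  shows "side_count q 3 = side_count q 1" "length q = 2 * (side_count q 1 + side_count q 4)"
    and "side_count q 1 * cos (slope_angle (q ! 0)) = side_count q 4 * sin (slope_angle (q ! 0))"
proof -
  let ?\<psi> = "slope_angle (q ! 0)"
  let ?T = "orbit_length q"
  let ?v = "velocity (q ! 0)"
  have ph: "in_phase (q ! 0)"
    using billiard_orbit_in_phase[OF assms periodic_orbit_length_pos[OF assms]] .
  have "\<bar>nrm 3 \<bullet> ?v\<bar> = \<bar>nrm 1 \<bullet> ?v\<bar>" "\<bar>nrm 2 \<bullet> ?v\<bar> = \<bar>nrm 4 \<bullet> ?v\<bar>"
    by (cases ?v; simp add: nrm_def)+
  then have counts: "?T * sin ?\<psi> = 2 * side_count q 1" "?T * sin ?\<psi> = 2 * side_count q 3"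
      "?T * cos ?\<psi> = 2 * side_count q 4" "?T * cos ?\<psi> = 2 * side_count q 2"
    using orbit_length_side_count[OF assms] abs_velocity_slope_angle[OF ph] by (metis insertCI)+
  then show "side_count q 3 = side_count q 1" "length q = 2 * (side_count q 1 + side_count q 4)"
    using side_count_sum[OF assms] by simp_all
  have "side_count q 1 * cos ?\<psi> = (?T * sin ?\<psi> / 2) * cos ?\<psi>"
    using counts(1) by simp
  also have "\<dots> = (?T * cos ?\<psi> / 2) * sin ?\<psi>"
    by (simp add: algebra_simps)
  also have "\<dots> = side_count q 4 * sin ?\<psi>"
    using counts(3) by simp
  finally show "side_count q 1 * cos ?\<psi> = side_count q 4 * sin ?\<psi>" .
qed

lemma lambda_plus_stable_slope_angle:
  assumes "periodic_orbit billiard_step q" "lambda_plus_stable q"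
  shows "slope_angle (q ! 0) = 0 \<or> slope_angle (q ! 0) = pi/4 \<or> slope_angle (q ! 0) = pi/2"
proof -
  let ?\<psi> = "slope_angle (q ! 0)"
  define a b where "a = side_count q 1" and "b = side_count q 4"
  note counts = side_counts_slope_angle[OF assms(1), folded a_def b_def]
  have "real (length q) * ?\<psi> = pi/2 * (2 * a)"
    using lambda_plus_stable_closing[OF assms] counts(1) unfolding a_def by simp
  then have closing: "?\<psi> * (a + b) = (pi/2) * a"
    using counts(2) by (simp add: field_simps)
  have "0 < a + b"
    using periodic_orbit_length_pos[OF assms(1)] counts(2) by simp
  then have "a = 0 \<or> b = 0 \<or> a = b"
    using rational_slope_degenerate closing counts(3) by blast
  then show ?thesis
  proof (elim disjE)
    assume "a = 0"
    then show ?thesis using closing \<open>0 < a + b\<close> by simp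
  next
    assume "b = 0"
    then show ?thesis using closing \<open>0 < a + b\<close> by simp
  next
    assume "a = b"
    then show ?thesis using closing \<open>0 < a + b\<close> by (simp add: field_simps)
  qed
qed

section \<open>Perpendicular and diagonal orbits\<close>

definition diag_angle :: "bool \<Rightarrow> real" where
  "diag_angle b = (if b then pi/4 else - (pi/4))"

text \<open>Collision maps in the arc length parameter for the trajectories of slope +-1 leaving at
  angle diag_angle b, and for the trajectories leaving perpendicularly.\<close>
definition diag_map :: "bool \<Rightarrow> real \<Rightarrow> real" where
  "diag_map b s = (if b then (if s < 1 then 2 - s else if s < 2 then 4 - s else if s < 3 then 6 - s else 4 - s)
                   else (if s < 1 then 4 - s else if s < 2 then 2 - s else if s < 3 then 4 - s else 6 - s))"

definition perp_map :: "real \<Rightarrow> real" where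
  "perp_map s = (if s < 1 then 3 - s else if s < 2 then 5 - s else if s < 3 then 3 - s else 5 - s)"

definition next_side :: "bool \<Rightarrow> nat \<Rightarrow> nat" where
  "next_side b k = (if b then k mod 4 + 1 else (k + 2) mod 4 + 1)"

lemma billiard_step_diag:
  assumes "billiard_step x y" "snd x = diag_angle b"
  shows "y = (diag_map b (fst x), diag_angle b)"
proof -
  obtain t where st: "0 < t" "position y = position x + t *\<^sub>R velocity x"
      "sin (snd y) = velocity x \<bullet> tng (side (fst y))" "in_phase x" "in_phase y"
    using billiard_stepE[OF assms(1)] by metis
  have "0 < t * (sqrt 2 / 2)" using st(1) by simp
  then have y: "fst y = diag_map b (fst x) \<and> sin (snd y) = sin (diag_angle b)"
    using nonvertex_cases[of "fst x"] nonvertex_cases[of "fst y"] st(2-5) assms(2)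
    by (cases b) (auto simp: in_phase_iff position_def velocity_def dir_side diag_angle_def
        diag_map_def tng_def sin_45 cos_45)
  have "- (pi/2) \<le> snd y" "snd y \<le> pi/2"
    using st(5) by (auto simp: in_phase_iff)
  moreover have "- (pi/2) \<le> diag_angle b" "diag_angle b \<le> pi/2"
    using pi_gt_zero by (cases b; simp add: diag_angle_def; linarith)+
  ultimately have "snd y = diag_angle b"
    using y sin_inj_pi by blast
  then show ?thesis
    using y by (simp add: prod_eq_iff)
qed

lemma billiard_step_perp:
  assumes "billiard_step x y" "snd x = 0"
  shows "y = (perp_map (fst x), 0)"
proof -
  obtain t where st: "0 < t" "position y = position x + t *\<^sub>R velocity x"
      "sin (snd y) = velocity x \<bullet> tng (side (fst y))" "in_phase x" "in_phase y"
    using billiard_stepE[OF assms(1)] by metis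
  have y: "fst y = perp_map (fst x) \<and> sin (snd y) = sin 0"
    using nonvertex_cases[of "fst x"] nonvertex_cases[of "fst y"] st assms(2)
    by (auto simp: in_phase_iff position_def velocity_def dir_side perp_map_def tng_def)
  have "- (pi/2) \<le> snd y" "snd y \<le> pi/2"
    using st(5) by (auto simp: in_phase_iff)
  then have "snd y = 0"
    using y sin_inj_pi[of "snd y" 0] by simp
  then show ?thesis
    using y by (simp add: prod_eq_iff)
qed

lemma diag_map_nonvertex:
  assumes "nonvertex s"
  shows "nonvertex (diag_map b s) \<and> side (diag_map b s) = next_side b (side s)"
  using nonvertex_cases[OF assms]
  by (cases b) (auto simp: diag_map_def next_side_def nonvertex_side_iff)

lemma perp_map_nonvertex:
  assumes "nonvertex s"
  shows "nonvertex (perp_map s) \<and> side (perp_map s) = (side s + 1) mod 4 + 1"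
  using nonvertex_cases[OF assms]
  by (auto simp: perp_map_def nonvertex_side_iff)

lemma perp_map_perp_map: "nonvertex s \<Longrightarrow> perp_map (perp_map s) = s"
  using nonvertex_cases[of s] by (auto simp: perp_map_def)

lemma diag_map_4: "nonvertex s \<Longrightarrow> (diag_map b ^^ 4) s = s"
  using nonvertex_cases[of s] by (cases b) (auto simp: diag_map_def numeral_eq_Suc)

lemma periodic_orbit_iterate:
  assumes "\<forall>i<length q. q ! (Suc i mod length q) = g (q ! i)" "i < length q"
  shows "q ! ((i + k) mod length q) = (g ^^ k) (q ! i)"
proof (induction k)
  case (Suc k)
  have "(i + Suc k) mod length q = Suc ((i + k) mod length q) mod length q"
    by (simp add: mod_Suc_eq)
  moreover have "(i + k) mod length q < length q"
    by (rule mod_less_divisor) (use assms(2) in linarith)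
  ultimately show ?case
    using assms(1) Suc by simp
qed (use assms(2) in simp)

lemma primitive_orbit_length:
  assumes "primitive q" "0 < length q" "\<forall>i<length q. q ! (Suc i mod length q) = g (q ! i)"
    and "0 < n" "(g ^^ n) (q ! 0) = q ! 0" "\<And>j. 0 < j \<Longrightarrow> j < n \<Longrightarrow> (g ^^ j) (q ! 0) \<noteq> q ! 0"
  shows "length q = n"
proof -
  let ?L = "length q"
  have iter: "q ! (j mod ?L) = (g ^^ j) (q ! 0)" for j
    using periodic_orbit_iterate[OF assms(3,2), of j] by simp
  have "q ! ((i + n) mod ?L) = q ! i" if "i < ?L" for i
  proof -
    have "(g ^^ (i + n)) (q ! 0) = (g ^^ i) ((g ^^ n) (q ! 0))"
      by (simp add: funpow_add)
    then show ?thesis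
      using iter[of "i + n"] iter[of i] assms(5) that by simp
  qed
  then have "\<not> n < ?L"
    using assms(1,4) unfolding primitive_def by blast
  moreover have "\<not> ?L < n"
  proof
    assume "?L < n"
    then have "(g ^^ ?L) (q ! 0) \<noteq> q ! 0" using assms(2,6) by blast
    then show False using iter[of ?L] by simp
  qed
  ultimately show ?thesis by simp
qed

lemma perpendicular_orbit_shape:
  assumes q: "periodic_orbit billiard_step q" "primitive q"
    and perp: "\<forall>i<length q. snd (q ! i) = 0"
  shows "length q = 2 \<and> side (fst (q ! 1)) = (side (fst (q ! 0)) + 1) mod 4 + 1"
proof -
  let ?L = "length q"
  define g where "g z = (perp_map (fst z), 0 :: real)" for z :: phase
  have L: "0 < ?L" using periodic_orbit_length_pos[OF q(1)] .
  have x0: "nonvertex (fst (q ! 0))"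
    using billiard_orbit_in_phase[OF q(1) L] by (simp add: in_phase_iff)
  have step: "\<forall>i<?L. q ! (Suc i mod ?L) = g (q ! i)"
    using billiard_step_perp[OF periodic_orbit_step[OF q(1)]] perp unfolding g_def by blast
  have sides: "side (fst (g (q ! 0))) = (side (fst (q ! 0)) + 1) mod 4 + 1"
    using perp_map_nonvertex[OF x0] by (simp add: g_def)
  have "?L = 2"
  proof (rule primitive_orbit_length[OF q(2) L step])
    show "(g ^^ 2) (q ! 0) = q ! 0"
      using perp_map_perp_map[OF x0] perp L by (simp add: g_def numeral_2_eq_2 prod_eq_iff)
    show "(g ^^ j) (q ! 0) \<noteq> q ! 0" if "0 < j" "j < 2" for j
      using that sides nonvertex_side[OF x0] by (auto simp: numeral_2_eq_2 less_Suc_eq)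
  qed simp
  moreover have "q ! 1 = g (q ! 0)"
    using step L \<open>?L = 2\<close> by (metis One_nat_def mod_less one_less_numeral_iff semiring_norm(76))
  ultimately show ?thesis
    using sides by simp
qed

lemma diagonal_orbit_map:
  assumes q: "periodic_orbit billiard_step q" and diag: "\<forall>i<length q. \<bar>snd (q ! i)\<bar> = pi/4"
  obtains b where "\<forall>i<length q. snd (q ! i) = diag_angle b
      \<and> q ! (Suc i mod length q) = (diag_map b (fst (q ! i)), diag_angle b)"
proof -
  let ?L = "length q"
  have L: "0 < ?L" using periodic_orbit_length_pos[OF q] .
  define b where "b = (0 \<le> snd (q ! 0))"
  have "\<bar>snd (q ! 0)\<bar> = pi/4" using diag L by blast
  then have "snd (q ! 0) = diag_angle b"
    unfolding b_def diag_angle_def by auto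
  then have angle: "snd (q ! i) = diag_angle b" if "i < ?L" for i
    using that
  proof (induction i)
    case (Suc i)
    then have i: "i < ?L" and "snd (q ! i) = diag_angle b" by simp_all
    then have "q ! (Suc i mod ?L) = (diag_map b (fst (q ! i)), diag_angle b)"
      using billiard_step_diag[OF periodic_orbit_step[OF q i]] by blast
    then show ?case using Suc.prems by simp
  qed
  show thesis
    using that angle billiard_step_diag[OF periodic_orbit_step[OF q]] by blast
qed

lemma next_side_mod: "next_side b k mod 4 = (k + (if b then 1 else 3)) mod 4"
  unfolding next_side_def by (cases b) (simp_all; presburger)+

lemma next_side_funpow_mod:
  "(next_side b ^^ j) k mod 4 = (k + j * (if b then 1 else 3)) mod 4"
proof (induction j)
  case (Suc j)
  let ?c = "if b then 1 else 3 :: nat"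
  have "(next_side b ^^ Suc j) k mod 4 = ((next_side b ^^ j) k mod 4 + ?c) mod 4"
    by (simp add: next_side_mod mod_add_left_eq)
  also have "\<dots> = (k + Suc j * ?c) mod 4"
    unfolding Suc by (simp add: mod_simps ac_simps)
  finally show ?case .
qed simp

lemma next_side_funpow_neq:
  assumes "0 < j" "j < 4"
  shows "(next_side b ^^ j) k \<noteq> k"
proof
  assume "(next_side b ^^ j) k = k"
  then have "(k + j * (if b then 1 else 3)) mod 4 = k mod 4"
    by (metis next_side_funpow_mod)
  show False
  proof (cases b)
    case True
    then have "(k + j) mod 4 = k mod 4" using \<open>(k + j * _) mod 4 = _\<close> by simp
    then show False using assms by presburger
  next
    case False
    then have "(k + j * 3) mod 4 = k mod 4" using \<open>(k + j * _) mod 4 = _\<close> by simp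
    then show False using assms by presburger
  qed
qed

lemma next_side_range: "next_side b k \<in> {1, 2, 3, 4}"
proof -
  have "1 \<le> next_side b k \<and> next_side b k \<le> 4"
    unfolding next_side_def by (cases b) auto
  then show ?thesis by auto
qed

lemma next_side_funpow_range: "k \<in> {1, 2, 3, 4} \<Longrightarrow> (next_side b ^^ i) k \<in> {1, 2, 3, 4}"
  by (cases i) (simp, simp only: funpow.simps(2) o_apply next_side_range)

lemma next_side_funpow_4:
  assumes "k \<in> {1, 2, 3, 4}"
  shows "(next_side b ^^ 4) k = k"
proof -
  have "(next_side b ^^ 4) k = next_side b (next_side b (next_side b (next_side b k)))"
    by (simp add: numeral_eq_Suc)
  then show ?thesis
    using assms by (cases b) (auto simp: next_side_def)
qed

lemma diag_map_funpow:
  assumes "nonvertex s"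
  shows "nonvertex ((diag_map b ^^ j) s) \<and> side ((diag_map b ^^ j) s) = (next_side b ^^ j) (side s)"
  by (induction j) (use assms diag_map_nonvertex in auto)

lemma diagonal_orbit_side:
  assumes q: "periodic_orbit billiard_step q"
    and diag: "\<forall>i<length q. snd (q ! i) = diag_angle b
      \<and> q ! (Suc i mod length q) = (diag_map b (fst (q ! i)), diag_angle b)"
    and "i < length q"
  shows "side (fst (q ! i)) = (next_side b ^^ i) (side (fst (q ! 0)))"
  using assms(3)
proof (induction i)
  case (Suc i)
  then have i: "i < length q" "Suc i mod length q = Suc i" by simp_all
  have "nonvertex (fst (q ! i))"
    using billiard_orbit_in_phase[OF q i(1)] by (simp add: in_phase_iff)
  then show ?case
    using Suc diag_map_nonvertex diag i by (metis fst_conv funpow.simps(2) o_apply)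
qed simp

lemma diagonal_orbit_length:
  assumes q: "periodic_orbit billiard_step q" "primitive q"
    and diag: "\<forall>i<length q. snd (q ! i) = diag_angle b
      \<and> q ! (Suc i mod length q) = (diag_map b (fst (q ! i)), diag_angle b)"
  shows "length q = 4"
proof -
  let ?L = "length q"
  define g where "g z = (diag_map b (fst z), diag_angle b)" for z :: phase
  have L: "0 < ?L" using periodic_orbit_length_pos[OF q(1)] .
  have x0: "nonvertex (fst (q ! 0))"
    using billiard_orbit_in_phase[OF q(1) L] by (simp add: in_phase_iff)
  have step: "\<forall>i<?L. q ! (Suc i mod ?L) = g (q ! i)"
    using diag unfolding g_def by blast
  have g_funpow: "(g ^^ j) (q ! 0) = ((diag_map b ^^ j) (fst (q ! 0)), diag_angle b)" for j
    using diag L by (induction j) (auto simp: g_def prod_eq_iff)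
  show ?thesis
  proof (rule primitive_orbit_length[OF q(2) L step])
    show "(g ^^ 4) (q ! 0) = q ! 0"
      using g_funpow[of 4] diag_map_4[OF x0] diag L by (simp add: prod_eq_iff)
    show "(g ^^ j) (q ! 0) \<noteq> q ! 0" if "0 < j" "j < 4" for j
    proof
      assume "(g ^^ j) (q ! 0) = q ! 0"
      then have "(diag_map b ^^ j) (fst (q ! 0)) = fst (q ! 0)"
        using g_funpow[of j] by (metis fst_conv)
      then show False
        using diag_map_funpow[OF x0, where b = b and j = j]
          next_side_funpow_neq[OF that, of b "side (fst (q ! 0))"] by simp
    qed
  qed simp
qed

lemma diagonal_orbit_fagnano:
  assumes q: "periodic_orbit billiard_step q"
    and diag: "\<forall>i<length q. snd (q ! i) = diag_angle b
      \<and> q ! (Suc i mod length q) = (diag_map b (fst (q ! i)), diag_angle b)"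
  shows "fagnano_orbit q"
  unfolding fagnano_orbit_def
proof (intro exI[of _ "if b then 1 else 3"] conjI allI impI)
  fix j assume j: "j < length q"
  have "nonvertex (fst (q ! j))"
    using billiard_orbit_in_phase[OF q j] by (simp add: in_phase_iff)
  then have "side (fst (q ! (Suc j mod length q))) = next_side b (side (fst (q ! j)))"
    using diag_map_nonvertex diag j by simp
  moreover have "Suc j mod length q < length q"
    by (rule mod_less_divisor) (use j in linarith)
  ultimately show "itinerary q ! (Suc j mod length q) mod 4 = (itinerary q ! j + (if b then 1 else 3)) mod 4"
    using j by (simp add: itinerary_def next_side_mod)
qed auto

section \<open>Periodic orbits of Phi_lambda near the Fagnano orbits\<close>

lemma affine_path_in_open_unit_interval:
  fixes p d t \<tau> :: real
  assumes "0 \<le> p" "p \<le> 1" "0 \<le> p + t * d" "p + t * d \<le> 1"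
    and "0 < p + t/2 * d" "p + t/2 * d < 1" "0 < \<tau>" "\<tau> < t"
  shows "0 < p + \<tau> * d \<and> p + \<tau> * d < 1"
  using assms by (smt (verit, del_insts) mult_less_cancel_right_disj zero_le_mult_iff)

lemma bpt_in_unit_square: "nonvertex s \<Longrightarrow> 0 \<le> fst (bpt s) \<and> fst (bpt s) \<le> 1 \<and> 0 \<le> snd (bpt s) \<and> snd (bpt s) \<le> 1"
  using nonvertex_cases[of s] by auto

text \<open>By convexity it suffices to check that the midpoint of the chord lies inside the square.\<close>
lemma billiard_stepI:
  assumes "in_phase x" "in_phase y" "0 < t" "position y = position x + t *\<^sub>R velocity x"
    and "position x + (t/2) *\<^sub>R velocity x \<in> open_square"
    and "sin (snd y) = velocity x \<bullet> tng (side (fst y))"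
  shows "billiard_step x y"
proof -
  obtain p1 p2 where p: "position x = (p1, p2)" by fastforce
  obtain d1 d2 where d: "velocity x = (d1, d2)" by fastforce
  have "0 \<le> p1 \<and> p1 \<le> 1 \<and> 0 \<le> p2 \<and> p2 \<le> 1"
    using bpt_in_unit_square assms(1) p by (fastforce simp: in_phase_iff position_def)
  moreover have "0 \<le> p1 + t * d1 \<and> p1 + t * d1 \<le> 1 \<and> 0 \<le> p2 + t * d2 \<and> p2 + t * d2 \<le> 1"
    using bpt_in_unit_square assms(2,4) p d by (fastforce simp: in_phase_iff position_def)
  moreover have "0 < p1 + t/2 * d1 \<and> p1 + t/2 * d1 < 1 \<and> 0 < p2 + t/2 * d2 \<and> p2 + t/2 * d2 < 1"
    using assms(5) p d by (simp add: open_square_def)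
  ultimately have "position x + \<tau> *\<^sub>R velocity x \<in> open_square" if "0 < \<tau>" "\<tau> < t" for \<tau>
    using affine_path_in_open_unit_interval[OF _ _ _ _ _ _ that] p d by (simp add: open_square_def)
  then show ?thesis
    using assms unfolding billiard_step_def position_def velocity_def by blast
qed

text \<open>The periodic orbits of Phi_lambda near the Fagnano orbits hit every side at the same angle
  alpha, which must satisfy alpha = lambda (pi/2 - alpha); at lambda = 1 they are the Fagnano
  orbits through the midpoints of the sides.\<close>
definition fagnano_angle :: "real \<Rightarrow> real" where
  "fagnano_angle lam = (pi/2) * lam / (1 + lam)"

definition fagnano_offset :: "real \<Rightarrow> real" where
  "fagnano_offset lam = cos (fagnano_angle lam) / (sin (fagnano_angle lam) + cos (fagnano_angle lam))"

definition fagnano_point :: "real \<Rightarrow> bool \<Rightarrow> nat \<Rightarrow> phase" where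
  "fagnano_point lam b k = (if b then (real k - 1 + fagnano_offset lam, fagnano_angle lam)
                            else (real k - fagnano_offset lam, - fagnano_angle lam))"

definition fagnano_orbit_list :: "real \<Rightarrow> bool \<Rightarrow> nat \<Rightarrow> phase list" where
  "fagnano_orbit_list lam b k = map (\<lambda>i. fagnano_point lam b ((next_side b ^^ i) k)) [0..<4]"

lemma fagnano_angle_bounds: "0 < lam \<Longrightarrow> 0 < fagnano_angle lam \<and> fagnano_angle lam < pi/2"
  unfolding fagnano_angle_def by (auto simp: field_simps)

lemma fagnano_offset_bounds:
  assumes "0 < lam"
  shows "0 < fagnano_offset lam \<and> fagnano_offset lam < 1"
proof -
  have "0 < sin (fagnano_angle lam)" "0 < cos (fagnano_angle lam)"
    using fagnano_angle_bounds[OF assms] by (auto intro: sin_gt_zero cos_gt_zero_pi)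
  then show ?thesis unfolding fagnano_offset_def by (simp add: field_simps)
qed

lemma fagnano_step:
  assumes "0 < lam" "k \<in> {1, 2, 3, 4}"
  shows "lambda_step lam (fagnano_point lam b k) (fagnano_point lam b (next_side b k))"
proof -
  define \<alpha> where "\<alpha> = fagnano_angle lam"
  define a where "a = fagnano_offset lam"
  \<comment> \<open>t (sin alpha, cos alpha) = (1 - a, a) is the chord from offset a on one side to
    offset a on the next one\<close>
  define t where "t = 1 / (sin \<alpha> + cos \<alpha>)"
  have \<alpha>: "0 < \<alpha>" "\<alpha> < pi/2" using fagnano_angle_bounds[OF assms(1)] by (simp_all add: \<alpha>_def)
  have sc: "0 < sin \<alpha>" "0 < cos \<alpha>" using \<alpha> by (auto intro: sin_gt_zero cos_gt_zero_pi)
  have a: "0 < a" "a < 1" using fagnano_offset_bounds[OF assms(1)] by (simp_all add: a_def)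
  have t: "0 < t" "t * cos \<alpha> = a" "t * sin \<alpha> = 1 - a"
    using sc unfolding t_def a_def fagnano_offset_def \<alpha>_def[symmetric] by (auto simp: field_simps)
  have lam: "lam * (pi/2 - \<alpha>) = \<alpha>"
    using assms(1) unfolding \<alpha>_def fagnano_angle_def by (simp add: field_simps)
  have side: "nonvertex (real j + a) \<and> side (real j + a) = Suc j"
    "nonvertex (real (Suc j) - a) \<and> side (real (Suc j) - a) = Suc j" if "j \<le> 3" for j
    using nonvertexI[of j "real j + a"] nonvertexI[of j "real (Suc j) - a"] a that by auto
  have nv: "nonvertex a" "nonvertex (1 + a)" "nonvertex (2 + a)" "nonvertex (3 + a)"
      "nonvertex (1 - a)" "nonvertex (2 - a)" "nonvertex (3 - a)" "nonvertex (4 - a)"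
    and sd: "side a = 1" "side (1 + a) = 2" "side (2 + a) = 3" "side (3 + a) = 4"
      "side (1 - a) = 1" "side (2 - a) = 2" "side (3 - a) = 3" "side (4 - a) = 4"
    using side[of 0] side[of 1] side[of 2] side[of 3] by (simp_all add: add.commute)
  have bp: "bpt a = (a, 0)" "bpt (1 + a) = (1, a)" "bpt (2 + a) = (1 - a, 1)" "bpt (3 + a) = (0, 1 - a)"
      "bpt (1 - a) = (1 - a, 0)" "bpt (2 - a) = (1, 1 - a)" "bpt (3 - a) = (a, 1)" "bpt (4 - a) = (0, a)"
    using a by (simp_all add: bpt_def)
  have mid: "t/2 * cos \<alpha> = a/2" "t/2 * sin \<alpha> = (1 - a)/2"
    using t by simp_all
  have cs: "sin (pi/2 - \<alpha>) = cos \<alpha>" "sin (\<alpha> - pi/2) = - cos \<alpha>"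
    by (simp_all add: sin_diff)
  define \<theta> where "\<theta> = (if b then pi/2 - \<alpha> else \<alpha> - pi/2)"
  have "billiard_step (fagnano_point lam b k) (fst (fagnano_point lam b (next_side b k)), \<theta>)"
    using assms(2)
  proof (cases b; elim insertE emptyE)
  qed (rule billiard_stepI[where t = t];
      use a t \<alpha> nv sd bp mid cs in \<open>auto simp: \<theta>_def fagnano_point_def next_side_def
        in_phase_iff position_def velocity_def dir_side tng_def open_square_def
        \<alpha>_def[symmetric] a_def[symmetric] algebra_simps\<close>)+
  moreover have "snd (fagnano_point lam b (next_side b k)) = lam * \<theta>"
    using lam by (auto simp: \<theta>_def fagnano_point_def \<alpha>_def[symmetric] algebra_simps)
  ultimately show ?thesis
    unfolding lambda_step_def by blast
qed

lemma lambda_step_one: "lambda_step 1 = billiard_step"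
  unfolding lambda_step_def by (auto simp: fun_eq_iff)

lemma fagnano_orbit_list_periodic:
  assumes "0 < lam" "k \<in> {1, 2, 3, 4}"
  shows "periodic_orbit (lambda_step lam) (fagnano_orbit_list lam b k)"
proof -
  let ?k = "\<lambda>j. (next_side b ^^ j) k"
  have "?k (Suc i mod 4) = next_side b (?k i)" if "i < 4" for i
  proof (cases "i = 3")
    case True
    have "next_side b (?k 3) = ?k 4"
      by (simp add: numeral_3_eq_3 numeral_eq_Suc)
    then show ?thesis
      using True next_side_funpow_4[OF assms(2)] by simp
  next
    case False
    then show ?thesis using that by simp
  qed
  then show ?thesis
    unfolding periodic_orbit_def fagnano_orbit_list_def
    using fagnano_step[OF assms(1) next_side_funpow_range[OF assms(2)]] by simp
qed

lemma fagnano_orbit_list_itinerary: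
  assumes "0 < lam" "k \<in> {1, 2, 3, 4}"
  shows "itinerary (fagnano_orbit_list lam b k) = map (\<lambda>i. (next_side b ^^ i) k) [0..<4]"
proof -
  have "side (fst (fagnano_point lam b j)) = j" if "j \<in> {1, 2, 3, 4}" for j
    using that fagnano_offset_bounds[OF assms(1)]
    by (auto simp: fagnano_point_def nonvertex_side_iff[THEN iffD2, THEN conjunct2])
  then show ?thesis
    unfolding itinerary_def fagnano_orbit_list_def using next_side_funpow_range[OF assms(2)] by simp
qed

lemma fagnano_orbit_list_angles: "map snd (fagnano_orbit_list 1 b k) = map (\<lambda>i. diag_angle b) [0..<4]"
  by (simp add: fagnano_orbit_list_def fagnano_point_def fagnano_angle_def diag_angle_def)

lemma isCont_fagnano_point: "isCont (\<lambda>lam. fagnano_point lam b k) 1"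
proof -
  have "0 < fagnano_angle 1" "fagnano_angle 1 < pi/2"
    using fagnano_angle_bounds[of 1] by simp_all
  then have nz: "sin (fagnano_angle 1) + cos (fagnano_angle 1) \<noteq> 0"
    using sin_gt_zero[of "fagnano_angle 1"] cos_gt_zero_pi[of "fagnano_angle 1"] by linarith
  have angle: "continuous (at 1) fagnano_angle"
    unfolding fagnano_angle_def by (intro continuous_intros) simp
  then have "continuous (at 1) fagnano_offset"
    unfolding fagnano_offset_def by (intro continuous_intros nz)
  then show ?thesis
    using angle unfolding fagnano_point_def by (cases b) (simp_all add: continuous_intros)
qed

section \<open>Lambda-stable cylinders\<close>

lemma lambda_stable_family:
  fixes f :: "real \<Rightarrow> phase list"
  assumes "\<And>lam. 0 < lam \<Longrightarrow> periodic_orbit (lambda_step lam) (f lam) \<and> itinerary (f lam) = itinerary (f 1)"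
    and "\<And>i. i < length (f 1) \<Longrightarrow> isCont (\<lambda>lam. f lam ! i) 1"
  shows "lambda_plus_stable (f 1) \<and> lambda_minus_stable (f 1)"
proof -
  have conv: "\<forall>i < length (f 1). (\<lambda>n. f (X n) ! i) \<longlonglongrightarrow> f 1 ! i" if "X \<longlonglongrightarrow> 1" for X
    using isCont_tendsto_compose[OF assms(2) that] by blast
  define lp where "lp n = 1 + inverse (real (Suc n))" for n
  define lm where "lm n = 1 + - inverse (real (Suc (Suc n)))" for n
  have lp: "\<forall>n. lp (Suc n) < lp n" "lp \<longlonglongrightarrow> 1" "\<forall>n. 0 < lp n"
    unfolding lp_def using LIMSEQ_inverse_real_of_nat_add[of 1]
    by (simp_all add: field_simps add_pos_pos)
  have lm: "\<forall>n. lm n < lm (Suc n)" "lm \<longlonglongrightarrow> 1" "\<forall>n. 0 < lm n"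
    unfolding lm_def using LIMSEQ_Suc[OF LIMSEQ_inverse_real_of_nat_add_minus[of 1]]
    by (simp_all add: field_simps)
  have "lambda_plus_stable (f 1)"
    unfolding lambda_plus_stable_def
  proof (rule exI[of _ lp], rule exI[of _ "\<lambda>n. f (lp n)"], intro conjI)
    show "\<forall>n. periodic_orbit (lambda_step (lp n)) (f (lp n)) \<and> itinerary (f (lp n)) = itinerary (f 1)"
      using assms(1) lp(3) by blast
  qed (use lp conv[OF lp(2)] in simp_all)
  moreover have "lambda_minus_stable (f 1)"
    unfolding lambda_minus_stable_def
  proof (rule exI[of _ lm], rule exI[of _ "\<lambda>n. f (lm n)"], intro conjI)
    show "\<forall>n. periodic_orbit (lambda_step (lm n)) (f (lm n)) \<and> itinerary (f (lm n)) = itinerary (f 1)"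
      using assms(1) lm(3) by blast
  qed (use lm conv[OF lm(2)] in simp_all)
  ultimately show ?thesis ..
qed

lemma nrm_opposite_side: "k \<in> {1, 2, 3, 4} \<Longrightarrow> nrm ((k + 1) mod 4 + 1) = - nrm k"
  by (auto simp: nrm_def)

lemma slope_angle_extreme:
  assumes "in_phase x" "slope_angle x = 0 \<or> slope_angle x = pi/2"
  shows "snd x = 0"
  using assms by (auto simp: slope_angle_def in_phase_iff split: if_splits)

lemma slope_angle_diagonal: "slope_angle x = pi/4 \<Longrightarrow> \<bar>snd x\<bar> = pi/4"
  by (auto simp: slope_angle_def split: if_splits)

lemma cylinder_of_memD:
  assumes "q' \<in> cylinder_of q"
  shows "periodic_orbit billiard_step q'" "length q' = length q"
    and "\<And>i. i < length q \<Longrightarrow> side (fst (q' ! i)) = side (fst (q ! i)) \<and> snd (q' ! i) = snd (q ! i)"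
proof -
  have q': "periodic_orbit billiard_step q'" "itinerary q' = itinerary q" "map snd q' = map snd q"
    using assms unfolding cylinder_of_def by simp_all
  show "periodic_orbit billiard_step q'" "length q' = length q"
    using q'(1) itinerary_eq_length[OF q'(2)] by simp_all
  show "side (fst (q' ! i)) = side (fst (q ! i)) \<and> snd (q' ! i) = snd (q ! i)" if "i < length q" for i
    using itinerary_eq_side[OF q'(2) that] arg_cong[OF q'(3), of "\<lambda>l. l ! i"] that
      itinerary_eq_length[OF q'(2)] by simp
qed

lemma cylinder_of_self: "periodic_orbit billiard_step q \<Longrightarrow> q \<in> cylinder_of q"
  by (simp add: cylinder_of_def)

lemma fagnano_orbit_itinerary_cong:
  assumes "itinerary q' = itinerary q"
  shows "fagnano_orbit q' \<longleftrightarrow> fagnano_orbit q"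
  using itinerary_eq_length[OF assms] by (simp add: fagnano_orbit_def assms)

lemma perpendicular_orbit_lambda_orbit:
  assumes "periodic_orbit billiard_step q" "\<forall>i<length q. snd (q ! i) = 0"
  shows "periodic_orbit (lambda_step lam) q"
  unfolding periodic_orbit_def
proof (intro conjI allI impI)
  fix i assume i: "i < length q"
  moreover have "Suc i mod length q < length q"
    by (rule mod_less_divisor) (use i in linarith)
  ultimately have "snd (q ! (Suc i mod length q)) = 0" using assms(2) by blast
  then show "lambda_step lam (q ! i) (q ! (Suc i mod length q))"
    using periodic_orbit_step[OF assms(1) i] unfolding lambda_step_def
    by (metis mult_zero_right prod.collapse)
qed (use assms(1) in \<open>simp add: periodic_orbit_def\<close>)

lemma diagonal_cylinder_fagnano4:
  assumes q: "periodic_orbit billiard_step q" "primitive q"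
    and diag: "\<forall>i<length q. \<bar>snd (q ! i)\<bar> = pi/4"
  shows "fagnano4_cylinder (cylinder_of q)"
proof -
  obtain b where b: "\<forall>i<length q. snd (q ! i) = diag_angle b
      \<and> q ! (Suc i mod length q) = (diag_map b (fst (q ! i)), diag_angle b)"
    using diagonal_orbit_map[OF q(1) diag] by blast
  have L: "length q = 4" by (rule diagonal_orbit_length[OF q b])
  show ?thesis
    unfolding fagnano4_cylinder_def
  proof (intro conjI ballI allI impI)
    show "cylinder_of q \<noteq> {}" using cylinder_of_self[OF q(1)] by blast
    fix q'' assume q'': "q'' \<in> cylinder_of q"
    have "itinerary q'' = itinerary q"
      using q'' unfolding cylinder_of_def by simp
    then show "fagnano_orbit q''"
      using fagnano_orbit_itinerary_cong diagonal_orbit_fagnano[OF q(1) b] by blast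
    show "length q'' = 4"
      using cylinder_of_memD(2)[OF q''] L by simp
    show "\<bar>snd (q'' ! i)\<bar> = pi/4" if "i < 4" for i
      using cylinder_of_memD(3)[OF q'', of i] diag L that by simp
  qed
qed

lemma perpendicular_cylinder_ping_pong:
  assumes q: "periodic_orbit billiard_step q" "primitive q"
    and perp: "\<forall>i<length q. snd (q ! i) = 0"
  shows "ping_pong_cylinder (cylinder_of q)"
proof -
  have shape: "length q = 2" "side (fst (q ! 1)) = (side (fst (q ! 0)) + 1) mod 4 + 1"
    using perpendicular_orbit_shape[OF q perp] by simp_all
  have "side (fst (q ! 0)) \<in> {1, 2, 3, 4}"
    using billiard_orbit_in_phase[OF q(1), of 0] shape(1) nonvertex_side by (simp add: in_phase_iff)
  then have opposite: "nrm (side (fst (q ! 1))) = - nrm (side (fst (q ! 0)))"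
    unfolding shape(2) by (rule nrm_opposite_side)
  show ?thesis
    unfolding ping_pong_cylinder_def
  proof (intro conjI ballI)
    show "cylinder_of q \<noteq> {}" using cylinder_of_self[OF q(1)] by blast
    fix q'' assume q'': "q'' \<in> cylinder_of q"
    note q''_eq = cylinder_of_memD(3)[OF q'', of 0] cylinder_of_memD(3)[OF q'', of 1]
    show "length q'' = 2" using cylinder_of_memD(2)[OF q''] shape(1) by simp
    show "snd (q'' ! 0) = 0" "snd (q'' ! 1) = 0" using q''_eq perp shape(1) by simp_all
    show "nrm (side (fst (q'' ! 1))) = - nrm (side (fst (q'' ! 0)))"
      using q''_eq opposite shape(1) by simp
  qed
qed

lemma lambda_stable_cylinder_shape:
  assumes q: "periodic_orbit billiard_step q" "primitive q"
    and stable: "lambda_stable_cylinder (cylinder_of q)"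
  shows "ping_pong_cylinder (cylinder_of q) \<or> fagnano4_cylinder (cylinder_of q)"
proof -
  obtain q' where q': "q' \<in> cylinder_of q" "lambda_plus_stable q'"
    using stable unfolding lambda_stable_cylinder_def by blast
  note mem = cylinder_of_memD[OF q'(1)]
  have same: "slope_angle (q ! i) = slope_angle (q' ! 0)" if "i < length q" for i
  proof -
    have "slope_angle (q ! i) = slope_angle (q' ! i)"
      using mem(3)[OF that] by (simp add: slope_angle_def)
    also have "\<dots> = slope_angle (q' ! 0)"
      using periodic_orbit_invariant[of billiard_step q' slope_angle i] mem(1,2) that
        slope_angle_billiard_step by simp
    finally show ?thesis .
  qed
  consider "slope_angle (q' ! 0) = pi/4" | "slope_angle (q' ! 0) = 0 \<or> slope_angle (q' ! 0) = pi/2"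
    using lambda_plus_stable_slope_angle[OF mem(1) q'(2)] by blast
  then show ?thesis
  proof cases
    case 1
    have "\<forall>i<length q. \<bar>snd (q ! i)\<bar> = pi/4"
      using same 1 slope_angle_diagonal by metis
    then show ?thesis
      using diagonal_cylinder_fagnano4[OF q] by blast
  next
    case 2
    have "\<forall>i<length q. snd (q ! i) = 0"
    proof (intro allI impI)
      fix i assume i: "i < length q"
      show "snd (q ! i) = 0"
        by (rule slope_angle_extreme[OF billiard_orbit_in_phase[OF q(1) i]]) (simp only: same[OF i] 2)
    qed
    then show ?thesis
      using perpendicular_cylinder_ping_pong[OF q] by blast
  qed
qed

lemma ping_pong_cylinder_lambda_stable:
  assumes q: "periodic_orbit billiard_step q" and pp: "ping_pong_cylinder (cylinder_of q)"
  shows "lambda_stable_cylinder (cylinder_of q)"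
proof -
  have "length q = 2" "snd (q ! 0) = 0" "snd (q ! 1) = 0"
    using pp cylinder_of_self[OF q] unfolding ping_pong_cylinder_def by auto
  then have "\<forall>i<length q. snd (q ! i) = 0"
    by (metis less_2_cases One_nat_def)
  then have "lambda_plus_stable q \<and> lambda_minus_stable q"
    using lambda_stable_family[of "\<lambda>_. q"] perpendicular_orbit_lambda_orbit[OF q] by simp
  then show ?thesis
    unfolding lambda_stable_cylinder_def using cylinder_of_self[OF q] by blast
qed

lemma fagnano_orbit_list_lambda_stable:
  assumes "k \<in> {1, 2, 3, 4}"
  shows "lambda_plus_stable (fagnano_orbit_list 1 b k) \<and> lambda_minus_stable (fagnano_orbit_list 1 b k)"
proof (rule lambda_stable_family)
  show "periodic_orbit (lambda_step lam) (fagnano_orbit_list lam b k)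
      \<and> itinerary (fagnano_orbit_list lam b k) = itinerary (fagnano_orbit_list 1 b k)"
    if "0 < lam" for lam
    using fagnano_orbit_list_periodic[OF that assms] fagnano_orbit_list_itinerary[OF that assms]
      fagnano_orbit_list_itinerary[of 1 k b] assms by simp
  show "isCont (\<lambda>lam. fagnano_orbit_list lam b k ! i) 1" if "i < length (fagnano_orbit_list 1 b k)" for i
    using that isCont_fagnano_point by (simp add: fagnano_orbit_list_def)
qed

lemma fagnano_orbit_list_mem_cylinder:
  assumes q: "periodic_orbit billiard_step q" "length q = 4"
    and b: "\<forall>i<length q. snd (q ! i) = diag_angle b
      \<and> q ! (Suc i mod length q) = (diag_map b (fst (q ! i)), diag_angle b)"
    and k: "k = side (fst (q ! 0))"
  shows "k \<in> {1, 2, 3, 4}" "fagnano_orbit_list 1 b k \<in> cylinder_of q"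
proof -
  let ?f = "fagnano_orbit_list 1 b k"
  show k14: "k \<in> {1, 2, 3, 4}"
    using billiard_orbit_in_phase[OF q(1)] nonvertex_side q(2) unfolding k by (simp add: in_phase_iff)
  have len: "length ?f = 4"
    by (simp add: fagnano_orbit_list_def)
  have "itinerary ?f = itinerary q"
  proof (rule nth_equalityI)
    show "length (itinerary ?f) = length (itinerary q)"
      using len q(2) by (simp add: itinerary_def)
    fix i assume "i < length (itinerary ?f)"
    then have i: "i < 4" using len by (simp add: itinerary_def)
    have "itinerary ?f ! i = (next_side b ^^ i) k"
      using fagnano_orbit_list_itinerary[of 1 k b] k14 i by simp
    also have "\<dots> = itinerary q ! i"
      using diagonal_orbit_side[OF q(1) b, of i] i q(2) by (simp add: k itinerary_def)
    finally show "itinerary ?f ! i = itinerary q ! i" .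
  qed
  moreover have "map snd ?f = map snd q"
  proof (rule nth_equalityI)
    show "length (map snd ?f) = length (map snd q)" using len q(2) by simp
    fix i assume "i < length (map snd ?f)"
    then have i: "i < 4" using len by simp
    then show "map snd ?f ! i = map snd q ! i"
      using fagnano_orbit_list_angles[of b k] b q(2) by (simp add: fagnano_orbit_list_def)
  qed
  moreover have "periodic_orbit billiard_step ?f"
    using fagnano_orbit_list_periodic[of 1 k b] k14 by (simp add: lambda_step_one)
  ultimately show "?f \<in> cylinder_of q"
    by (simp add: cylinder_of_def)
qed

lemma fagnano4_cylinder_lambda_stable:
  assumes q: "periodic_orbit billiard_step q" and fc: "fagnano4_cylinder (cylinder_of q)"
  shows "lambda_stable_cylinder (cylinder_of q)"
proof -
  have L: "length q = 4" and diag: "\<forall>i<length q. \<bar>snd (q ! i)\<bar> = pi/4"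
    using fc cylinder_of_self[OF q] unfolding fagnano4_cylinder_def by auto
  obtain b where b: "\<forall>i<length q. snd (q ! i) = diag_angle b
      \<and> q ! (Suc i mod length q) = (diag_map b (fst (q ! i)), diag_angle b)"
    using diagonal_orbit_map[OF q diag] by blast
  note mem = fagnano_orbit_list_mem_cylinder[OF q L b refl]
  show ?thesis
    unfolding lambda_stable_cylinder_def
    using mem(2) fagnano_orbit_list_lambda_stable[OF mem(1)] by blast
qed

theorem corollary4p7:
  assumes "periodic_cylinder C"
  shows "lambda_stable_cylinder C \<longleftrightarrow> ping_pong_cylinder C \<or> fagnano4_cylinder C"
proof -
  obtain q where q: "periodic_orbit billiard_step q" "primitive q" "C = cylinder_of q"
    using assms unfolding periodic_cylinder_def by blast
  show ?thesis
    unfolding q(3)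
    using lambda_stable_cylinder_shape[OF q(1,2)] ping_pong_cylinder_lambda_stable[OF q(1)]
      fagnano4_cylinder_lambda_stable[OF q(1)] by blast
qed

end
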